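(* Let $\varphi_1,\dots,\varphi_m: L\to L'$ and $\psi_1,\dots,\psi_m: N\to N'$ be simplicial maps between simplicial complexes. Assume $\beta: N\to L$ and $\alpha: L'\to N'$ are strong equivalences and that $\alpha\circ\varphi_i\circ\beta\sim\psi_i$ for all $i=1,\dots,m$. Then $\mathrm{SD}(\varphi_1,\dots,\varphi_m)=\mathrm{SD}(\psi_1,\dots,\psi_m)$.
   Context: Simplicial maps $f,g: K\to K'$ are contiguous if $f(\sigma)\cup g(\sigma)$ is a simplex for every simplex $\sigma$ of $K$; $f\sim g$ (same contiguity class) if they are joined by a finite chain of simplicial maps with consecutive ones contiguous. A simplicial map $f: K\to K'$ is a strong equivalence if there is a simplicial map $g: K'\to K$ with $f\circ g\sim 1_{K'}$ and $g\circ f\sim 1_K$. For simplicial maps $\varphi_1,\dots,\varphi_m: K\to K'$, $\mathrm{SD}(\varphi_1,\dots,\varphi_m)$ is the least $n\ge0$ such that $K$ is a union of subcomplexes $K_0,\dots,K_n$ with $\varphi_i|_{K_k}\sim\varphi_j|_{K_k}$ for all $i,j,k$. *)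

theory Defs
  imports Main "HOL-Library.Extended_Nat"
begin

definition simplicial_complex :: "'a set set \<Rightarrow> bool" where
  "simplicial_complex K \<longleftrightarrow>
     (\<forall>\<sigma>\<in>K. finite \<sigma> \<and> \<sigma> \<noteq> {}) \<and>
     (\<forall>\<sigma>\<in>K. \<forall>\<tau>. \<tau> \<subseteq> \<sigma> \<and> \<tau> \<noteq> {} \<longrightarrow> \<tau> \<in> K)"

definition simplicial_map :: "'a set set \<Rightarrow> 'b set set \<Rightarrow> ('a \<Rightarrow> 'b) \<Rightarrow> bool" where
  "simplicial_map K K' f \<longleftrightarrow> (\<forall>\<sigma>\<in>K. f ` \<sigma> \<in> K')"

definition contiguous :: "'a set set \<Rightarrow> 'b set set \<Rightarrow> ('a \<Rightarrow> 'b) \<Rightarrow> ('a \<Rightarrow> 'b) \<Rightarrow> bool" where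
  "contiguous K K' f g \<longleftrightarrow> (\<forall>\<sigma>\<in>K. f ` \<sigma> \<union> g ` \<sigma> \<in> K')"

definition contiguity_class :: "'a set set \<Rightarrow> 'b set set \<Rightarrow> ('a \<Rightarrow> 'b) \<Rightarrow> ('a \<Rightarrow> 'b) \<Rightarrow> bool" where
  "contiguity_class K K' f g \<longleftrightarrow> simplicial_map K K' f \<and>
     (\<lambda>h1 h2. simplicial_map K K' h1 \<and> simplicial_map K K' h2 \<and> contiguous K K' h1 h2)\<^sup>*\<^sup>* f g"

definition strong_equivalence :: "'a set set \<Rightarrow> 'b set set \<Rightarrow> ('a \<Rightarrow> 'b) \<Rightarrow> bool" where
  "strong_equivalence K K' f \<longleftrightarrow> simplicial_map K K' f \<and>
     (\<exists>g. simplicial_map K' K g \<and> contiguity_class K' K' (f \<circ> g) id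
                              \<and> contiguity_class K K (g \<circ> f) id)"

definition subcomplex :: "'a set set \<Rightarrow> 'a set set \<Rightarrow> bool" where
  "subcomplex K0 K \<longleftrightarrow> simplicial_complex K0 \<and> K0 \<subseteq> K"

definition SD_cover :: "'a set set \<Rightarrow> 'b set set \<Rightarrow> nat \<Rightarrow> (nat \<Rightarrow> 'a \<Rightarrow> 'b) \<Rightarrow> nat \<Rightarrow> bool" where
  "SD_cover K K' m \<phi> n \<longleftrightarrow> (\<exists>Ks :: nat \<Rightarrow> 'a set set.
      (\<forall>k\<le>n. subcomplex (Ks k) K) \<and> K = (\<Union>k\<le>n. Ks k) \<and>
      (\<forall>k\<le>n. \<forall>i\<in>{1..m}. \<forall>j\<in>{1..m}. contiguity_class (Ks k) K' (\<phi> i) (\<phi> j)))"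

definition SD :: "'a set set \<Rightarrow> 'b set set \<Rightarrow> nat \<Rightarrow> (nat \<Rightarrow> 'a \<Rightarrow> 'b) \<Rightarrow> enat" where
  "SD K K' m \<phi> = (if \<exists>n. SD_cover K K' m \<phi> n then enat (LEAST n. SD_cover K K' m \<phi> n) else \<infinity>)"

end

theory Submission
  imports Defs
begin

text \<open>Pulling a cover of \<open>L\<close> back along \<open>\<beta>\<close> gives a cover of \<open>N\<close>; on each pulled-back piece
  \<open>\<psi>\<^sub>i \<sim> \<alpha> \<circ> \<phi>\<^sub>i \<circ> \<beta> \<sim> \<alpha> \<circ> \<phi>\<^sub>j \<circ> \<beta> \<sim> \<psi>\<^sub>j\<close>, because contiguity classes are stable under
  restriction and under composition with simplicial maps on either side. So every cover
  witnessing \<open>SD(\<phi>) \<le> n\<close> yields one witnessing \<open>SD(\<psi>) \<le> n\<close>. For the converse, take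
  \<open>\<beta>'\<close> and \<open>\<alpha>'\<close> with \<open>\<beta> \<circ> \<beta>' \<sim> id\<close> and \<open>\<alpha>' \<circ> \<alpha> \<sim> id\<close>: then \<open>\<alpha>' \<circ> \<psi>\<^sub>i \<circ> \<beta>' \<sim> \<phi>\<^sub>i\<close>,
  and the same argument applies with the roles of the two families exchanged.\<close>

lemma rtranclp_map:
  assumes "\<And>x y. R x y \<Longrightarrow> S (F x) (F y)" and "R\<^sup>*\<^sup>* a b"
  shows "S\<^sup>*\<^sup>* (F a) (F b)"
  using assms(2)
proof induction
  case (step y z)
  show ?case by (rule rtranclp.rtrancl_into_rtrancl[OF step.IH assms(1)[OF step.hyps(2)]])
qed simp

definition contiguous_simplicial :: "'a set set \<Rightarrow> 'b set set \<Rightarrow> ('a \<Rightarrow> 'b) \<Rightarrow> ('a \<Rightarrow> 'b) \<Rightarrow> bool"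
  where "contiguous_simplicial K K' f g \<longleftrightarrow>
    simplicial_map K K' f \<and> simplicial_map K K' g \<and> contiguous K K' f g"

lemma contiguity_class_iff:
  "contiguity_class K K' f g \<longleftrightarrow>
    simplicial_map K K' f \<and> (contiguous_simplicial K K')\<^sup>*\<^sup>* f g"
  unfolding contiguity_class_def contiguous_simplicial_def ..

lemma simplicial_map_comp:
  "simplicial_map K K' f \<Longrightarrow> simplicial_map K' K'' g \<Longrightarrow> simplicial_map K K'' (g \<circ> f)"
  unfolding simplicial_map_def image_comp[symmetric] by blast

lemma simplicial_map_id_iff_subset: "simplicial_map K0 K id \<longleftrightarrow> K0 \<subseteq> K"
  unfolding simplicial_map_def by auto

lemma contiguous_simplicial_sym: "symp (contiguous_simplicial K K')"
  unfolding symp_def contiguous_simplicial_def contiguous_def by (auto simp: Un_commute)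

lemma contiguous_simplicial_comp_right:
  "contiguous_simplicial K K' f g \<Longrightarrow> simplicial_map K0 K h \<Longrightarrow>
    contiguous_simplicial K0 K' (f \<circ> h) (g \<circ> h)"
  unfolding contiguous_simplicial_def contiguous_def simplicial_map_def image_comp[symmetric]
  by blast

lemma contiguous_simplicial_comp_left:
  "contiguous_simplicial K K' f g \<Longrightarrow> simplicial_map K' K'' h \<Longrightarrow>
    contiguous_simplicial K K'' (h \<circ> f) (h \<circ> g)"
  unfolding contiguous_simplicial_def contiguous_def simplicial_map_def image_comp[symmetric]
    image_Un[symmetric]
  by blast

lemma contiguity_class_simplicial_map:
  assumes "contiguity_class K K' f g"
  shows "simplicial_map K K' f" "simplicial_map K K' g"
proof -
  show f: "simplicial_map K K' f" using assms by (simp add: contiguity_class_iff)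
  have "(contiguous_simplicial K K')\<^sup>*\<^sup>* f g" using assms by (simp add: contiguity_class_iff)
  then show "simplicial_map K K' g"
    using f by induction (simp_all add: contiguous_simplicial_def)
qed

lemma contiguity_class_refl: "simplicial_map K K' f \<Longrightarrow> contiguity_class K K' f f"
  by (simp add: contiguity_class_iff)

lemma contiguity_class_sym:
  assumes "contiguity_class K K' f g"
  shows "contiguity_class K K' g f"
proof -
  have "(contiguous_simplicial K K')\<^sup>*\<^sup>* f g" using assms by (simp add: contiguity_class_iff)
  then have "(contiguous_simplicial K K')\<^sup>*\<^sup>* g f"
    by (rule sympD[OF symp_rtranclp[OF contiguous_simplicial_sym]])
  with contiguity_class_simplicial_map(2)[OF assms] show ?thesis
    by (simp add: contiguity_class_iff)
qed

lemma contiguity_class_trans: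
  "contiguity_class K K' f g \<Longrightarrow> contiguity_class K K' g h \<Longrightarrow> contiguity_class K K' f h"
  unfolding contiguity_class_iff by (meson rtranclp_trans)

lemma contiguity_class_comp_right:
  assumes "contiguity_class K K' f g" "simplicial_map K0 K h"
  shows "contiguity_class K0 K' (f \<circ> h) (g \<circ> h)"
proof -
  from assms(1) have f: "simplicial_map K K' f" and fg: "(contiguous_simplicial K K')\<^sup>*\<^sup>* f g"
    by (simp_all add: contiguity_class_iff)
  have "(contiguous_simplicial K0 K')\<^sup>*\<^sup>* (f \<circ> h) (g \<circ> h)"
    by (rule rtranclp_map[where F = "\<lambda>f. f \<circ> h", OF _ fg])
      (erule contiguous_simplicial_comp_right[OF _ assms(2)])
  with simplicial_map_comp[OF assms(2) f] show ?thesis by (simp add: contiguity_class_iff)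
qed

lemma contiguity_class_comp_left:
  assumes "contiguity_class K K' f g" "simplicial_map K' K'' h"
  shows "contiguity_class K K'' (h \<circ> f) (h \<circ> g)"
proof -
  from assms(1) have f: "simplicial_map K K' f" and fg: "(contiguous_simplicial K K')\<^sup>*\<^sup>* f g"
    by (simp_all add: contiguity_class_iff)
  have "(contiguous_simplicial K K'')\<^sup>*\<^sup>* (h \<circ> f) (h \<circ> g)"
    by (rule rtranclp_map[where F = "\<lambda>f. h \<circ> f", OF _ fg])
      (erule contiguous_simplicial_comp_left[OF _ assms(2)])
  with simplicial_map_comp[OF f assms(2)] show ?thesis by (simp add: contiguity_class_iff)
qed

lemma contiguity_class_comp:
  assumes "contiguity_class K K' f g" "contiguity_class K' K'' h k"
  shows "contiguity_class K K'' (h \<circ> f) (k \<circ> g)"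
proof (rule contiguity_class_trans)
  show "contiguity_class K K'' (h \<circ> f) (h \<circ> g)"
    using assms contiguity_class_comp_left contiguity_class_simplicial_map(1) by blast
  show "contiguity_class K K'' (h \<circ> g) (k \<circ> g)"
    using assms contiguity_class_comp_right contiguity_class_simplicial_map(2) by blast
qed

lemma contiguity_class_subset:
  "contiguity_class K K' f g \<Longrightarrow> K0 \<subseteq> K \<Longrightarrow> contiguity_class K0 K' f g"
  using contiguity_class_comp_right[where h = id] by (simp add: simplicial_map_id_iff_subset)

lemma contiguity_class_cancel_equivalences:
  assumes "contiguity_class N N' (\<alpha> \<circ> \<phi> \<circ> \<beta>) \<psi>"
    and "simplicial_map L L' \<phi>"
    and "simplicial_map L N \<beta>'" "contiguity_class L L (\<beta> \<circ> \<beta>') id"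
    and "simplicial_map N' L' \<alpha>'" "contiguity_class L' L' (\<alpha>' \<circ> \<alpha>) id"
  shows "contiguity_class L L' (\<alpha>' \<circ> \<psi> \<circ> \<beta>') \<phi>"
proof -
  have "contiguity_class L L' (\<alpha>' \<circ> \<psi> \<circ> \<beta>') (\<alpha>' \<circ> (\<alpha> \<circ> \<phi> \<circ> \<beta>) \<circ> \<beta>')"
    using contiguity_class_comp_right[OF
        contiguity_class_comp_left[OF contiguity_class_sym[OF assms(1)] assms(5)] assms(3)] .
  moreover have "contiguity_class L L' (\<alpha>' \<circ> (\<alpha> \<circ> \<phi> \<circ> \<beta>) \<circ> \<beta>') \<phi>"
    using contiguity_class_comp[OF contiguity_class_comp_left[OF assms(4,2)] assms(6)]
    by (simp add: comp_assoc)
  ultimately show ?thesis by (rule contiguity_class_trans)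
qed

lemma subcomplex_preimage:
  assumes N: "simplicial_complex N" and K: "simplicial_complex K"
  shows "subcomplex {\<sigma> \<in> N. \<beta> ` \<sigma> \<in> K} N"
  unfolding subcomplex_def simplicial_complex_def
proof (intro conjI ballI allI impI)
  fix \<sigma> assume "\<sigma> \<in> {\<sigma> \<in> N. \<beta> ` \<sigma> \<in> K}"
  then show "finite \<sigma>" "\<sigma> \<noteq> {}" using N unfolding simplicial_complex_def by auto
next
  fix \<sigma> \<tau> assume \<sigma>: "\<sigma> \<in> {\<sigma> \<in> N. \<beta> ` \<sigma> \<in> K}" and \<tau>: "\<tau> \<subseteq> \<sigma> \<and> \<tau> \<noteq> {}"
  from \<tau> have "\<beta> ` \<tau> \<subseteq> \<beta> ` \<sigma>" "\<beta> ` \<tau> \<noteq> {}" by auto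
  with K \<sigma> have "\<beta> ` \<tau> \<in> K" unfolding simplicial_complex_def by blast
  moreover have "\<tau> \<in> N" using N \<sigma> \<tau> unfolding simplicial_complex_def by blast
  ultimately show "\<tau> \<in> {\<sigma> \<in> N. \<beta> ` \<sigma> \<in> K}" by simp
qed auto

lemma SD_cover_transfer:
  assumes N: "simplicial_complex N"
    and \<beta>: "simplicial_map N L \<beta>" and \<alpha>: "simplicial_map L' N' \<alpha>"
    and \<psi>: "\<forall>i\<in>{1..m}. contiguity_class N N' (\<alpha> \<circ> \<phi> i \<circ> \<beta>) (\<psi> i)"
    and "SD_cover L L' m \<phi> n"
  shows "SD_cover N N' m \<psi> n"
proof -
  obtain Ks where Ks: "\<forall>k\<le>n. subcomplex (Ks k) L" "L = (\<Union>k\<le>n. Ks k)"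
    "\<forall>k\<le>n. \<forall>i\<in>{1..m}. \<forall>j\<in>{1..m}. contiguity_class (Ks k) L' (\<phi> i) (\<phi> j)"
    using assms(5) unfolding SD_cover_def by blast
  define Ns where "Ns k = {\<sigma> \<in> N. \<beta> ` \<sigma> \<in> Ks k}" for k
  have "subcomplex (Ns k) N" if "k \<le> n" for k
    using subcomplex_preimage[OF N] Ks(1) that unfolding Ns_def subcomplex_def by blast
  moreover have "N = (\<Union>k\<le>n. Ns k)"
    using \<beta> Ks(2) unfolding simplicial_map_def Ns_def by blast
  moreover have "contiguity_class (Ns k) N' (\<psi> i) (\<psi> j)"
    if "k \<le> n" "i \<in> {1..m}" "j \<in> {1..m}" for k i j
  proof -
    have Ns: "Ns k \<subseteq> N" "simplicial_map (Ns k) (Ks k) \<beta>"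
      unfolding Ns_def simplicial_map_def by auto
    have "contiguity_class (Ns k) N' (\<psi> i) (\<alpha> \<circ> \<phi> i \<circ> \<beta>)"
      using contiguity_class_sym[OF contiguity_class_subset[OF \<psi>[rule_format, OF that(2)] Ns(1)]] .
    moreover have "contiguity_class (Ns k) N' (\<alpha> \<circ> \<phi> i \<circ> \<beta>) (\<alpha> \<circ> \<phi> j \<circ> \<beta>)"
      using contiguity_class_comp_right[OF
          contiguity_class_comp_left[OF Ks(3)[rule_format, OF that] \<alpha>] Ns(2)] .
    moreover have "contiguity_class (Ns k) N' (\<alpha> \<circ> \<phi> j \<circ> \<beta>) (\<psi> j)"
      using contiguity_class_subset[OF \<psi>[rule_format, OF that(3)] Ns(1)] .
    ultimately show ?thesis by (meson contiguity_class_trans)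
  qed
  ultimately show ?thesis unfolding SD_cover_def by blast
qed

theorem corollary3p8:
  fixes L :: "'a set set" and L' :: "'b set set" and N :: "'c set set" and N' :: "'d set set"
    and \<phi> :: "nat \<Rightarrow> 'a \<Rightarrow> 'b" and \<psi> :: "nat \<Rightarrow> 'c \<Rightarrow> 'd"
    and \<beta> :: "'c \<Rightarrow> 'a" and \<alpha> :: "'b \<Rightarrow> 'd" and m :: nat
  assumes "simplicial_complex L" "simplicial_complex L'"
    and "simplicial_complex N" "simplicial_complex N'"
    and "\<forall>i\<in>{1..m}. simplicial_map L L' (\<phi> i)"
    and "\<forall>i\<in>{1..m}. simplicial_map N N' (\<psi> i)"
    and "strong_equivalence N L \<beta>"
    and "strong_equivalence L' N' \<alpha>"
    and "\<forall>i\<in>{1..m}. contiguity_class N N' (\<alpha> \<circ> \<phi> i \<circ> \<beta>) (\<psi> i)"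
  shows "SD L L' m \<phi> = SD N N' m \<psi>"
proof -
  obtain \<beta>' where \<beta>: "simplicial_map N L \<beta>"
    and \<beta>': "simplicial_map L N \<beta>'" "contiguity_class L L (\<beta> \<circ> \<beta>') id"
    using assms(7) unfolding strong_equivalence_def by blast
  obtain \<alpha>' where \<alpha>: "simplicial_map L' N' \<alpha>"
    and \<alpha>': "simplicial_map N' L' \<alpha>'" "contiguity_class L' L' (\<alpha>' \<circ> \<alpha>) id"
    using assms(8) unfolding strong_equivalence_def by blast
  have "\<forall>i\<in>{1..m}. contiguity_class L L' (\<alpha>' \<circ> \<psi> i \<circ> \<beta>') (\<phi> i)"
    using contiguity_class_cancel_equivalences[OF _ _ \<beta>' \<alpha>'] assms(5,9) by blast
  then have "SD_cover L L' m \<phi> n \<longleftrightarrow> SD_cover N N' m \<psi> n" for n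
    using SD_cover_transfer[OF assms(3) \<beta> \<alpha> assms(9)]
      SD_cover_transfer[OF assms(1) \<beta>'(1) \<alpha>'(1)] by blast
  then have "SD_cover L L' m \<phi> = SD_cover N N' m \<psi>" by (rule ext)
  then show ?thesis unfolding SD_def by simp
qed

end
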